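(* Let $A\in\mathbb{R}^{m\times n}$, $b\in\mathbb{R}^m$, and let $g:\mathbb{R}^m\to\mathbb{R}$ be $\mu_g$-strongly convex. Let $h(z):=g(z)-b^\top z$ and let $\hat z$ be the unique solution of $\min_{z}h(z)$ s.t. $A^\top z=0$. Let $\tilde z^*_k\in\mathbb{R}^m$, $z_k:=\nabla h^*(\tilde z^*_k)$, let $\mathcal{J}\subseteq[n]$ with $A_{:,\mathcal{J}}\ne 0$, $r:=(A_{:,\mathcal{J}})^\top z_k$, and for $\delta_z>0$ set $$\tilde z^*_{k+1}:=\tilde z^*_k-\delta_z\frac{\|r\|_2^2}{\|A_{:,\mathcal{J}}r\|_2^2}A_{:,\mathcal{J}}r,\qquad z_{k+1}:=\nabla h^*(\tilde z^*_{k+1})$$ (with $\tilde z^*_{k+1}:=\tilde z^*_k$ if $r=0$). Then $$D_h^{\tilde z^*_{k+1}}(z_{k+1},\hat z)\le D_h^{\tilde z^*_k}(z_k,\hat z)-\frac{\delta_z(2\mu_g-\delta_z)}{2\mu_g}\frac{\|r\|_2^4}{\|A_{:,\mathcal{J}}r\|_2^2}\le D_h^{\tilde z^*_k}(z_k,\hat z)-\frac{\delta_z(2\mu_g-\delta_z)}{2\mu_g}\frac{\|r\|_2^2}{\sigma_{\max}^2(A_{:,\mathcal{J}})},$$ where the middle term is interpreted as $0$ if $r=0$, and the second inequality is asserted for $0<\delta_z\le 2\mu_g$.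
   Context: $h^*$ denotes the Fenchel conjugate $h^*(u)=\sup_z\{\langle u,z\rangle-h(z)\}$, which is differentiable with $1/\mu_g$-Lipschitz gradient. The Bregman distance with respect to a convex function $h$ and $u\in\partial h(z)$ is $D_h^{u}(z,y):=h(y)-h(z)-\langle u,y-z\rangle=h^*(u)-\langle u,y\rangle+h(y)$ (note $\tilde z^*_k\in\partial h(z_k)$). $\sigma_{\max}(\cdot)$ is the largest singular value; $A_{:,\mathcal{J}}$ is the column submatrix indexed by $\mathcal{J}$. *)

theory Defs
  imports "HOL-Analysis.Analysis"
begin

definition strongly_convex :: "real \<Rightarrow> ('a::real_inner \<Rightarrow> real) \<Rightarrow> bool" where
  "strongly_convex mu f \<longleftrightarrow> convex_on UNIV (\<lambda>z. f z - mu / 2 * (norm z)\<^sup>2)"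

definition fenchel_conj :: "('a::real_inner \<Rightarrow> real) \<Rightarrow> 'a \<Rightarrow> real" where
  "fenchel_conj h u = (SUP z. inner u z - h z)"

definition bregman :: "('a::real_inner \<Rightarrow> real) \<Rightarrow> 'a \<Rightarrow> 'a \<Rightarrow> 'a \<Rightarrow> real" where
  "bregman h u z y = h y - h z - inner u (y - z)"

text \<open>Column submatrix A_{:,J}, represented as an m x n matrix whose columns outside J
  are zero (vectors in R^J are embedded in R^n by zero padding).\<close>
definition colsub :: "real^'n^'m \<Rightarrow> 'n set \<Rightarrow> real^'n^'m" where
  "colsub A J = (\<chi> i j. if j \<in> J then A $ i $ j else 0)"

definition sigma_max :: "real^'n^'m \<Rightarrow> real" where
  "sigma_max M = onorm (\<lambda>x. M *v x)"

end

theory Submission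
  imports Defs
begin

text \<open>Because the conjugate of the strongly convex h is differentiable, z = grad h^*(u) is the
  maximiser of <u, .> - h, and strong convexity gives D_h^u(z, y) >= mu/2 |y - z|^2.
  Comparing the Bregman distances at two dual points u, u' then yields the three-point bound
  D_h^u'(z', y) <= D_h^u(z, y) + <u' - u, z - y> + |u' - u|^2 / (2 mu).
  For the step u' = u - t A_J r the linear term is -t |r|^2, since A_J^T z = r and A_J^T zhat = 0;
  with t = delta |r|^2 / |A_J r|^2 the resulting quadratic in t is the first inequality, and
  |A_J r| <= sigma_max(A_J) |r| gives the second.\<close>

lemma convex_on_lower_bound_norm:
  fixes c :: "'a::euclidean_space \<Rightarrow> real"
  assumes cv: "convex_on UNIV c"
  shows "\<exists>B\<ge>0. \<forall>z. - B * norm z - B \<le> c z"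
proof -
  have "continuous_on UNIV c"
    using convex_on_continuous[OF open_UNIV cv] .
  then have "compact (c ` cball 0 1)"
    by (rule compact_continuous_image[OF continuous_on_subset]) auto
  then obtain B0 where "\<forall>x\<in>c ` cball 0 1. norm x \<le> B0"
    using compact_imp_bounded bounded_iff by metis
  then obtain B where B: "\<And>x. norm x \<le> 1 \<Longrightarrow> \<bar>c x\<bar> \<le> B" and "B \<ge> 0"
    by (intro that[of "max B0 0"]) force+
  have "- (2 * B) * norm z - 2 * B \<le> c z" for z
  proof (cases "norm z \<le> 1")
    case True
    have "0 \<le> B * norm z"
      using \<open>B \<ge> 0\<close> by simp
    then show ?thesis
      using B[OF True] unfolding abs_le_iff by linarith
  next
    case False
    define n where "n = norm z"
    have "n > 1"
      using False by (simp add: n_def)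
    have "c ((1 / n) *\<^sub>R z) \<le> (1 - 1 / n) * c 0 + 1 / n * c z"
      using convex_onD[OF cv, of "1 / n" 0 z] \<open>n > 1\<close> by simp
    moreover have "\<bar>c ((1 / n) *\<^sub>R z)\<bar> \<le> B"
      using \<open>n > 1\<close> by (intro B) (simp add: n_def)
    ultimately have "- B \<le> (1 - 1 / n) * c 0 + 1 / n * c z"
      unfolding abs_le_iff by linarith
    then have "- n * B \<le> (n - 1) * c 0 + c z"
      using \<open>n > 1\<close> by (simp add: field_simps)
    moreover have "(n - 1) * c 0 \<le> (n - 1) * B"
      using B[of 0] \<open>n > 1\<close> by (intro mult_left_mono) (auto simp: abs_le_iff)
    ultimately show ?thesis
      using \<open>B \<ge> 0\<close> by (simp add: n_def algebra_simps)
  qed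
  then show ?thesis
    using \<open>B \<ge> 0\<close> by (intro exI[of _ "2 * B"]) auto
qed

lemma strongly_convex_diff_inner:
  assumes "strongly_convex mu f"
  shows "strongly_convex mu (\<lambda>z. f z - inner b z)"
proof -
  have "convex_on UNIV (\<lambda>z. - inner b z)"
    unfolding convex_on_def by (auto simp: algebra_simps)
  then have "convex_on UNIV (\<lambda>z. (f z - mu / 2 * (norm z)\<^sup>2) + - inner b z)"
    using assms unfolding strongly_convex_def by (rule convex_on_add[rotated])
  then show ?thesis
    unfolding strongly_convex_def by (simp add: algebra_simps)
qed

lemma strongly_convexD:
  fixes f :: "'a::real_inner \<Rightarrow> real"
  assumes "strongly_convex mu f" "0 \<le> t" "t \<le> 1"
  shows "f ((1 - t) *\<^sub>R x + t *\<^sub>R y)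
           \<le> (1 - t) * f x + t * f y - mu / 2 * (t * (1 - t) * (norm (x - y))\<^sup>2)"
proof -
  define p where "p = (1 - t) *\<^sub>R x + t *\<^sub>R y"
  have norm_p: "(norm p)\<^sup>2 = (1 - t) * (norm x)\<^sup>2 + t * (norm y)\<^sup>2 - t * (1 - t) * (norm (x - y))\<^sup>2"
    unfolding p_def power2_norm_eq_inner
    by (simp add: inner_commute algebra_simps power2_eq_square)
  have "mu / 2 * (norm p)\<^sup>2 = (1 - t) * (mu / 2 * (norm x)\<^sup>2) + t * (mu / 2 * (norm y)\<^sup>2)
               - mu / 2 * (t * (1 - t) * (norm (x - y))\<^sup>2)"
    unfolding norm_p by (simp add: field_simps)
  moreover have "f p - mu / 2 * (norm p)\<^sup>2
      \<le> (1 - t) * (f x - mu / 2 * (norm x)\<^sup>2) + t * (f y - mu / 2 * (norm y)\<^sup>2)"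
    using assms unfolding strongly_convex_def p_def by (intro convex_onD) auto
  ultimately show ?thesis
    unfolding p_def[symmetric] right_diff_distrib by linarith
qed

lemma strongly_convex_minimizer_growth:
  fixes f :: "'a::real_inner \<Rightarrow> real"
  assumes sc: "strongly_convex mu f" and min: "\<And>x. f z \<le> f x"
  shows "f z + mu / 2 * (norm (y - z))\<^sup>2 \<le> f y"
proof -
  define D where "D = (norm (y - z))\<^sup>2"
  have "f z + mu / 2 * ((1 - t) * D) \<le> f y" if "0 < t" "t < 1" for t
  proof -
    have "f z \<le> (1 - t) * f z + t * f y - mu / 2 * (t * (1 - t) * D)"
      using min[of "(1 - t) *\<^sub>R z + t *\<^sub>R y"] strongly_convexD[OF sc, of t z y] that
      by (simp add: D_def norm_minus_commute)
    then have "t * (f z + mu / 2 * ((1 - t) * D)) \<le> t * f y"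
      by (simp add: field_simps)
    then show ?thesis
      using \<open>t > 0\<close> by simp
  qed
  moreover have "\<forall>\<^sub>F t in at_right 0. t \<in> {0::real<..<1}"
    by (rule eventually_at_right_real) simp
  ultimately have "\<forall>\<^sub>F t in at_right 0. f z + mu / 2 * ((1 - t) * D) \<le> f y"
    by (auto elim: eventually_mono)
  moreover have "((\<lambda>t. f z + mu / 2 * ((1 - t) * D)) \<longlongrightarrow> f z + mu / 2 * D) (at_right 0)"
    by (auto intro!: tendsto_eq_intros)
  ultimately show ?thesis
    unfolding D_def by (intro tendsto_le[OF trivial_limit_at_right_real, of "\<lambda>_. f y"]) auto
qed

lemma strongly_convex_argmax_inner_exists:
  fixes h :: "'a::euclidean_space \<Rightarrow> real"
  assumes sc: "strongly_convex mu h" and mu: "mu > 0"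
  shows "\<exists>z. \<forall>y. inner u y - h y \<le> inner u z - h z"
proof -
  define c where "c z = h z - mu / 2 * (norm z)\<^sup>2" for z
  have cv: "convex_on UNIV c"
    using sc unfolding strongly_convex_def c_def .
  obtain B where "B \<ge> 0" and B: "\<And>z. - B * norm z - B \<le> c z"
    using convex_on_lower_bound_norm[OF cv] by blast
  define \<phi> where "\<phi> y = inner u y - h y" for y
  define K where "K = norm u + B"
  have "K \<ge> 0"
    using \<open>B \<ge> 0\<close> by (simp add: K_def)
  have \<phi>_le: "\<phi> y \<le> K * norm y + B - mu / 2 * (norm y)\<^sup>2" for y
    using norm_cauchy_schwarz[of u y] B[of y]
    unfolding \<phi>_def K_def c_def by (simp add: algebra_simps)
  have "continuous_on UNIV c"
    using convex_on_continuous[OF open_UNIV cv] .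
  then have "continuous_on UNIV (\<lambda>y. inner u y - (c y + mu / 2 * (norm y)\<^sup>2))"
    by (intro continuous_intros)
  then have "continuous_on UNIV \<phi>"
    unfolding \<phi>_def c_def by simp
  define R where "R = 2 * (K + B + \<bar>\<phi> 0\<bar> + 1) / mu + 1"
  have "R \<ge> 1" and muR: "mu / 2 * R \<ge> K + B + \<bar>\<phi> 0\<bar> + 1"
    using mu \<open>K \<ge> 0\<close> \<open>B \<ge> 0\<close> by (auto simp: R_def field_simps)
  have far: "\<phi> y < \<phi> 0" if "norm y > R" for y
  proof -
    have "K * norm y + (B + \<bar>\<phi> 0\<bar> + 1) \<le> K * norm y + (B + \<bar>\<phi> 0\<bar> + 1) * norm y"
      using \<open>B \<ge> 0\<close> \<open>R \<ge> 1\<close> that by (intro add_left_mono mult_le_cancel_left1[THEN iffD2]) auto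
    also have "\<dots> = (K + B + \<bar>\<phi> 0\<bar> + 1) * norm y"
      by (simp add: algebra_simps)
    also have "\<dots> \<le> mu / 2 * R * norm y"
      using muR by (rule mult_right_mono) simp
    also have "\<dots> \<le> mu / 2 * (norm y)\<^sup>2"
      using mu that \<open>R \<ge> 1\<close> by (simp add: power2_eq_square mult_right_mono)
    finally show ?thesis
      using \<phi>_le[of y] by linarith
  qed
  have "\<exists>z\<in>cball 0 R. \<forall>y\<in>cball 0 R. \<phi> y \<le> \<phi> z"
    using \<open>R \<ge> 1\<close>
    by (intro continuous_attains_sup continuous_on_subset[OF \<open>continuous_on UNIV \<phi>\<close>]) auto
  then obtain z where z: "\<forall>y\<in>cball 0 R. \<phi> y \<le> \<phi> z"
    by blast
  have "\<phi> 0 \<le> \<phi> z"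
    using z \<open>R \<ge> 1\<close> by simp
  then have "\<phi> y \<le> \<phi> z" for y
    using far[of y] z by (cases "norm y \<le> R") auto
  then show ?thesis
    unfolding \<phi>_def by blast
qed

lemma fenchel_conj_gradient_is_argmax:
  fixes h :: "'a::real_inner \<Rightarrow> real"
  assumes ex: "\<And>v. \<exists>z. \<forall>y. inner v y - h y \<le> inner v z - h z"
    and G: "(fenchel_conj h has_derivative (\<lambda>v. inner z v)) (at u)"
  shows "inner u y - h y \<le> inner u z - h z"
proof -
  obtain Z where Z: "\<And>v y. inner v y - h y \<le> inner v (Z v) - h (Z v)"
    using ex by metis
  have conj: "fenchel_conj h v = inner v (Z v) - h (Z v)" for v
    unfolding fenchel_conj_def by (rule cSup_eq_maximum) (auto simp: Z)
  text \<open>Since fenchel_conj h v \<ge> <v, Z u> - h (Z u), with equality at v = u, the function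
    \<psi> is minimal at u, so its derivative z - Z u vanishes.\<close>
  define \<psi> where "\<psi> v = fenchel_conj h v - inner v (Z u)" for v
  have "\<forall>v\<in>UNIV. \<psi> u \<le> \<psi> v"
    unfolding \<psi>_def conj using Z[of _ "Z u"] by (auto simp: algebra_simps)
  moreover have "(\<psi> has_derivative (\<lambda>w. inner z w - inner w (Z u))) (at u)"
    unfolding \<psi>_def by (intro derivative_intros G)
  ultimately have "(\<lambda>w. inner z w - inner w (Z u)) = (\<lambda>w. 0)"
    using differential_zero_maxmin[OF UNIV_I open_UNIV] by blast
  then have "inner (z - Z u) (z - Z u) = 0"
    by (metis inner_commute inner_diff_left)
  then show ?thesis
    using Z by simp
qed

lemma bregman_fenchel_gradient_ge:
  fixes h :: "'a::euclidean_space \<Rightarrow> real"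
  assumes mu: "mu > 0" and sc: "strongly_convex mu h"
    and G: "(fenchel_conj h has_derivative (\<lambda>v. inner z v)) (at u)"
  shows "mu / 2 * (norm (y - z))\<^sup>2 \<le> bregman h u z y"
proof -
  have "inner u x - h x \<le> inner u z - h z" for x
    using fenchel_conj_gradient_is_argmax[OF strongly_convex_argmax_inner_exists[OF sc mu] G] .
  then have "h z - inner u z + mu / 2 * (norm (y - z))\<^sup>2 \<le> h y - inner u y"
    by (intro strongly_convex_minimizer_growth[OF strongly_convex_diff_inner[OF sc]])
      (simp add: algebra_simps)
  then show ?thesis
    unfolding bregman_def by (simp add: inner_diff_right)
qed

lemma inner_sub_half_norm_sq_le:
  fixes w e :: "'a::real_inner"
  assumes "mu > 0"
  shows "inner w e - mu / 2 * (norm e)\<^sup>2 \<le> (norm w)\<^sup>2 / (2 * mu)"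
proof -
  have "0 \<le> (norm (w - mu *\<^sub>R e))\<^sup>2"
    by simp
  also have "\<dots> = (norm w)\<^sup>2 - 2 * mu * inner w e + mu\<^sup>2 * (norm e)\<^sup>2"
    unfolding power2_norm_eq_inner by (simp add: inner_commute algebra_simps power2_eq_square)
  finally show ?thesis
    using assms by (simp add: field_simps power2_eq_square)
qed

lemma bregman_dual_step:
  fixes h :: "'a::real_inner \<Rightarrow> real"
  assumes mu: "mu > 0"
    and growth: "\<And>u y. mu / 2 * (norm (y - G u))\<^sup>2 \<le> bregman h u (G u) y"
  shows "bregman h u' (G u') x
           \<le> bregman h u (G u) x + inner (u' - u) (G u - x) + (norm (u' - u))\<^sup>2 / (2 * mu)"
proof -
  have "bregman h u' (G u') x
          = bregman h u (G u) x - bregman h u (G u) (G u')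
            + inner (u' - u) (G u - x) + inner (u' - u) (G u' - G u)"
    unfolding bregman_def by (simp add: inner_diff_left inner_diff_right inner_commute)
  then show ?thesis
    using growth[where u = u and y = "G u'"] inner_sub_half_norm_sq_le[OF mu, of "u' - u" "G u' - G u"]
    by linarith
qed

lemma transpose_colsub_mult_eq_zero:
  assumes "transpose A *v z = 0"
  shows "transpose (colsub A J) *v z = 0"
proof -
  have "(transpose (colsub A J) *v z) $ j = (if j \<in> J then (transpose A *v z) $ j else 0)" for j
    by (simp add: matrix_vector_mult_def transpose_def colsub_def)
  then show ?thesis
    using assms by (simp add: vec_eq_iff)
qed

lemma inner_matrix_vector_transpose:
  fixes M :: "real^'n^'m"
  shows "inner (M *v x) y = inner x (transpose M *v y)"
  using dot_lmul_matrix[of x "transpose M" y] by simp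

lemma inner_matrix_vector_transpose_self:
  fixes M :: "real^'n^'m"
  shows "inner (M *v (transpose M *v z)) z = (norm (transpose M *v z))\<^sup>2"
  by (simp only: inner_matrix_vector_transpose power2_norm_eq_inner)

lemma matrix_vector_mult_transpose_neq_0:
  fixes M :: "real^'n^'m"
  assumes "transpose M *v z \<noteq> 0"
  shows "M *v (transpose M *v z) \<noteq> 0"
  using inner_matrix_vector_transpose_self[of M z] assms by auto

lemma bregman_kaczmarz_step:
  fixes M :: "real^'n^'m" and h :: "real^'m \<Rightarrow> real"
  assumes mu: "mu > 0"
    and growth: "\<And>u y. mu / 2 * (norm (y - G u))\<^sup>2 \<le> bregman h u (G u) y"
    and feas: "transpose M *v x = 0"
    and r: "r = transpose M *v G u" "r \<noteq> 0"
    and u': "u' = u - (\<delta> * (norm r)\<^sup>2 / (norm (M *v r))\<^sup>2) *\<^sub>R (M *v r)"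
  shows "bregman h u' (G u') x
           \<le> bregman h u (G u) x - \<delta> * (2 * mu - \<delta>) / (2 * mu) * (norm r) ^ 4 / (norm (M *v r))\<^sup>2"
proof -
  define w where "w = M *v r"
  define t where "t = \<delta> * (norm r)\<^sup>2 / (norm w)\<^sup>2"
  have "inner w x = 0"
    unfolding w_def inner_matrix_vector_transpose feas by simp
  moreover have "inner w (G u) = (norm r)\<^sup>2"
    unfolding w_def r(1) by (rule inner_matrix_vector_transpose_self)
  ultimately have lin: "inner w (G u - x) = (norm r)\<^sup>2"
    by (simp add: inner_diff_right)
  have "w \<noteq> 0"
    unfolding w_def r(1) using r(2)[unfolded r(1)] by (rule matrix_vector_mult_transpose_neq_0)
  have "bregman h u' (G u') x
          \<le> bregman h u (G u) x + inner (u' - u) (G u - x) + (norm (u' - u))\<^sup>2 / (2 * mu)"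
    by (rule bregman_dual_step[OF mu growth])
  also have "\<dots> = bregman h u (G u) x - t * (norm r)\<^sup>2 + t\<^sup>2 * (norm w)\<^sup>2 / (2 * mu)"
    using lin by (simp add: u' w_def[symmetric] t_def[symmetric] power_mult_distrib)
  also have "\<dots> = bregman h u (G u) x - \<delta> * (2 * mu - \<delta>) / (2 * mu) * (norm r) ^ 4 / (norm w)\<^sup>2"
    using mu \<open>w \<noteq> 0\<close> by (simp add: t_def field_simps eval_nat_numeral)
  finally show ?thesis
    unfolding w_def .
qed

lemma norm_matrix_vector_le_sigma_max:
  fixes M :: "real^'n^'m"
  shows "norm (M *v x) \<le> sigma_max M * norm x"
  unfolding sigma_max_def by (rule onorm[OF matrix_vector_mul_bounded_linear])

lemma norm_pow4_div_norm_matrix_vector_ge: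
  fixes M :: "real^'n^'m"
  assumes "M *v r \<noteq> 0"
  shows "(norm r)\<^sup>2 / (sigma_max M)\<^sup>2 \<le> (norm r) ^ 4 / (norm (M *v r))\<^sup>2"
proof -
  have "r \<noteq> 0"
    using assms by auto
  have bound: "(norm (M *v r))\<^sup>2 \<le> (sigma_max M)\<^sup>2 * (norm r)\<^sup>2"
    unfolding power_mult_distrib[symmetric]
    using norm_matrix_vector_le_sigma_max[of M r] by (rule power_mono) simp
  then have "(sigma_max M)\<^sup>2 \<noteq> 0"
    using assms by auto
  then have "(norm r)\<^sup>2 / (sigma_max M)\<^sup>2 = (norm r) ^ 4 / ((sigma_max M)\<^sup>2 * (norm r)\<^sup>2)"
    using \<open>r \<noteq> 0\<close> by (simp add: field_simps eval_nat_numeral)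
  also have "\<dots> \<le> (norm r) ^ 4 / (norm (M *v r))\<^sup>2"
    using bound \<open>(sigma_max M)\<^sup>2 \<noteq> 0\<close> \<open>r \<noteq> 0\<close> assms by (intro divide_left_mono) auto
  finally show ?thesis .
qed

theorem mainTheorem3:
  fixes A :: "real^'n^'m" and b :: "real^'m" and g :: "real^'m \<Rightarrow> real"
    and mu \<delta> :: real and zhat zs :: "real^'m" and J :: "'n set"
    and G :: "real^'m \<Rightarrow> real^'m"
  assumes mu_pos: "mu > 0"
    and g_sc: "strongly_convex mu g"
    and G_grad: "\<And>u. ((fenchel_conj (\<lambda>z. g z - inner b z)) has_derivative (\<lambda>v. inner (G u) v)) (at u)"
    and zhat_feas: "transpose A *v zhat = 0"
    and zhat_min: "\<And>z. transpose A *v z = 0 \<Longrightarrow> g zhat - inner b zhat \<le> g z - inner b z"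
    and AJ_nz: "colsub A J \<noteq> 0"
    and delta_pos: "\<delta> > 0"
  shows
   "let h = (\<lambda>z. g z - inner b z); AJ = colsub A J; zk = G zs;
        r = transpose AJ *v zk;
        zs' = (if r = 0 then zs else zs - (\<delta> * (norm r)\<^sup>2 / (norm (AJ *v r))\<^sup>2) *\<^sub>R (AJ *v r));
        zk' = G zs';
        mid = (if r = 0 then 0 else \<delta> * (2 * mu - \<delta>) / (2 * mu) * (norm r) ^ 4 / (norm (AJ *v r))\<^sup>2)
    in bregman h zs' zk' zhat \<le> bregman h zs zk zhat - mid
       \<and> (\<delta> \<le> 2 * mu \<longrightarrow>
            bregman h zs zk zhat - mid
              \<le> bregman h zs zk zhat - \<delta> * (2 * mu - \<delta>) / (2 * mu) * (norm r)\<^sup>2 / (sigma_max AJ)\<^sup>2)"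
proof -
  define h where "h = (\<lambda>z. g z - inner b z)"
  define AJ where "AJ = colsub A J"
  define r where "r = transpose AJ *v G zs"
  define \<kappa> where "\<kappa> = \<delta> * (2 * mu - \<delta>) / (2 * mu)"
  have growth: "\<And>u y. mu / 2 * (norm (y - G u))\<^sup>2 \<le> bregman h u (G u) y"
    using bregman_fenchel_gradient_ge[OF mu_pos strongly_convex_diff_inner[OF g_sc] G_grad]
    unfolding h_def .
  have feas: "transpose AJ *v zhat = 0"
    unfolding AJ_def using zhat_feas by (rule transpose_colsub_mult_eq_zero)
  show ?thesis
  proof (cases "r = 0")
    case True
    then show ?thesis
      unfolding Let_def h_def[symmetric] AJ_def[symmetric] r_def[symmetric] by simp
  next
    case False
    have "AJ *v r \<noteq> 0"
      using False unfolding r_def by (rule matrix_vector_mult_transpose_neq_0)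
    then have sigma_bound: "\<kappa> * (norm r)\<^sup>2 / (sigma_max AJ)\<^sup>2 \<le> \<kappa> * (norm r) ^ 4 / (norm (AJ *v r))\<^sup>2"
      if "\<delta> \<le> 2 * mu"
      using mult_left_mono[OF norm_pow4_div_norm_matrix_vector_ge, of AJ r \<kappa>] that mu_pos delta_pos
      by (simp add: \<kappa>_def)
    define zs' where "zs' = zs - (\<delta> * (norm r)\<^sup>2 / (norm (AJ *v r))\<^sup>2) *\<^sub>R (AJ *v r)"
    have "bregman h zs' (G zs') zhat \<le> bregman h zs (G zs) zhat - \<kappa> * (norm r) ^ 4 / (norm (AJ *v r))\<^sup>2"
      unfolding \<kappa>_def by (rule bregman_kaczmarz_step[OF mu_pos growth feas r_def False zs'_def])
    then show ?thesis
      using sigma_bound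
      unfolding Let_def h_def[symmetric] AJ_def[symmetric] r_def[symmetric] \<kappa>_def[symmetric]
        zs'_def[symmetric]
      by (simp add: False)
  qed
qed

end
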